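(* Let $p=4f+1$ be a prime, and write $p=x^2+4y^2$ with integers $x,y$ and $x\equiv1\pmod 4$. Then $g_4(p)=4$ if $p=5$; $g_4(p)=3$ if $p\in\{13,17,29\}$; and $g_4(p)=2$ otherwise.
   Context: For $a\in\mathbb{F}_p^*$, $s_d(p,a)=\min\{k\mid a=\sum_{i=1}^k a_i^d,\ a_i\in\mathbb{F}_p^*\}$, and $g_d(p)=\max_{a\in\mathbb{F}_p^*}s_d(p,a)$ (the smallest $k$ such that every element of $\mathbb{F}_p^*$ is a sum of $k$ nonzero $d$-th powers). *)

theory Defs
  imports "HOL-Number_Theory.Number_Theory"
begin

text \<open>Elements of F_p are represented by integers modulo p.
  a is a sum of k nonzero d-th powers in F_p.\<close>
definition sum_nz_powers :: "nat \<Rightarrow> nat \<Rightarrow> nat \<Rightarrow> int \<Rightarrow> bool" where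
  "sum_nz_powers d p k a \<longleftrightarrow>
     (\<exists>as :: nat \<Rightarrow> int. (\<forall>i<k. \<not> int p dvd as i) \<and>
        [(\<Sum>i<k. as i ^ d) = a] (mod int p))"

definition s_pow :: "nat \<Rightarrow> nat \<Rightarrow> int \<Rightarrow> nat" where
  "s_pow d p a = (LEAST k. sum_nz_powers d p k a)"

definition g_pow :: "nat \<Rightarrow> nat \<Rightarrow> nat" where
  "g_pow d p = Max ((\<lambda>a. s_pow d p a) ` {1..int p - 1})"

end

theory Submission
  imports Defs
begin

text \<open>
  For \<open>p \<equiv> 1 (mod 4)\<close> fix \<open>i\<close> with \<open>i\<^sup>2 = -1\<close>. If some \<open>w \<noteq> 0\<close> makes both
  \<open>2w(w\<^sup>2 + a)\<close> and \<open>2iw(w\<^sup>2 - a)\<close> nonzero squares, then \<open>a\<close> is a sum of two nonzero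
  fourth powers. Counting such \<open>w\<close> with the quadratic character \<open>\<eta>\<close> expresses their number
  through \<open>p\<close> and three Jacobsthal sums \<open>\<phi>(b) = \<Sum>\<^sub>x \<eta>(x) \<eta>(x\<^sup>2 + b)\<close>, and
  \<open>\<phi>(b)\<^sup>2 \<le> 4p\<close> follows from \<open>\<Sum>\<^sub>b \<phi>(b)\<^sup>2 = 2p(p - 1)\<close>. So for \<open>p \<ge> 61\<close> there is always
  such a \<open>w\<close>, while a quadratic non-residue is never a single fourth power; hence
  \<open>g\<^sub>4(p) = 2\<close>. The primes below 61 are settled by explicit tables.
\<close>

section \<open>Sums of nonzero powers\<close>

lemma sum_nz_powers_of_list:
  fixes xs :: "int list"
  assumes "\<forall>x\<in>set xs. \<not> int p dvd x" "[(\<Sum>x\<leftarrow>xs. x ^ d) = a] (mod int p)"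
  shows "sum_nz_powers d p (length xs) a"
  unfolding sum_nz_powers_def
proof (intro exI[of _ "\<lambda>i. xs ! i"] conjI)
  show "\<forall>i<length xs. \<not> int p dvd xs ! i"
    using assms(1) by auto
  have "(\<Sum>i<length xs. xs ! i ^ d) = (\<Sum>x\<leftarrow>xs. x ^ d)"
    by (simp add: sum_list_sum_nth atLeast0LessThan)
  then show "[(\<Sum>i<length xs. xs ! i ^ d) = a] (mod int p)"
    using assms(2) by simp
qed

lemma not_sum_nz_powers_0: "\<not> int p dvd a \<Longrightarrow> \<not> sum_nz_powers d p 0 a"
  unfolding sum_nz_powers_def by (auto simp: cong_iff_dvd_diff)

lemma g_pow_eqI:
  assumes upper: "\<forall>a\<in>{1..int p - 1}. \<exists>k\<le>K. sum_nz_powers d p k a"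
    and b: "b \<in> {1..int p - 1}" and lower: "\<forall>j<K. \<not> sum_nz_powers d p j b"
  shows "g_pow d p = K"
  unfolding g_pow_def
proof (rule Max_eqI)
  have s_pow_le: "s_pow d p a \<le> K" if "a \<in> {1..int p - 1}" for a
    using upper that unfolding s_pow_def by (meson Least_le order_trans)
  then show "y \<le> K" if "y \<in> s_pow d p ` {1..int p - 1}" for y
    using that by blast
  obtain k where "sum_nz_powers d p k b"
    using upper b by blast
  then have "sum_nz_powers d p (s_pow d p b) b"
    unfolding s_pow_def by (rule LeastI)
  then have "s_pow d p b = K"
    using s_pow_le[OF b] lower by (meson not_less antisym)
  then show "K \<in> s_pow d p ` {1..int p - 1}"
    using b by force
qed simp

lemma sum_nz_powers_from_table:
  fixes W :: "int list list"
  assumes table: "map (\<lambda>xs. (\<Sum>x\<leftarrow>xs. x ^ d) mod int p) W = map int [1..<p]"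
    and entries: "\<forall>xs\<in>set W. length xs \<le> K \<and> (\<forall>x\<in>set xs. 0 < x \<and> x < int p)"
  shows "\<forall>a\<in>{1..int p - 1}. \<exists>k\<le>K. sum_nz_powers d p k a"
proof
  fix a assume a: "a \<in> {1..int p - 1}"
  define j where "j = nat a - 1"
  have len: "length W = p - 1"
    using arg_cong[OF table, of length] by simp
  have j: "j < length W"
    using a len unfolding j_def by auto
  have "(\<Sum>x\<leftarrow>W ! j. x ^ d) mod int p = int (1 + j)"
    using arg_cong[OF table, of "\<lambda>xs. xs ! j"] j len by simp
  also have "int (1 + j) = a"
    using a unfolding j_def by auto
  finally have "[(\<Sum>x\<leftarrow>W ! j. x ^ d) = a] (mod int p)"
    using a by (simp add: cong_def)
  moreover have "W ! j \<in> set W"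
    using j by simp
  then have "\<forall>x\<in>set (W ! j). \<not> int p dvd x"
    using entries zdvd_imp_le by fastforce
  ultimately have "sum_nz_powers d p (length (W ! j)) a"
    by (rule sum_nz_powers_of_list[rotated])
  moreover have "length (W ! j) \<le> K"
    using entries \<open>W ! j \<in> set W\<close> by auto
  ultimately show "\<exists>k\<le>K. sum_nz_powers d p k a"
    by blast
qed

lemma power_mod_in_table:
  assumes "p > 0" and table: "\<forall>r\<in>set [1..<p]. (int r) ^ d mod int p \<in> Q"
    and x: "\<not> int p dvd x"
  shows "x ^ d mod int p \<in> Q"
proof -
  define r where "r = nat (x mod int p)"
  have r: "int r = x mod int p"
    unfolding r_def using \<open>p > 0\<close> by simp
  moreover have "x mod int p \<noteq> 0"
    using x by (simp add: dvd_eq_mod_eq_0)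
  moreover have "x mod int p < int p"
    using \<open>p > 0\<close> by simp
  ultimately have "r \<in> set [1..<p]"
    by auto
  then have "(int r) ^ d mod int p \<in> Q"
    using table by blast
  then show ?thesis
    unfolding r by (simp add: power_mod)
qed

lemma not_sum_nz_powers_below_3:
  assumes powers: "\<And>x. \<not> int p dvd x \<Longrightarrow> x ^ d mod int p \<in> Q"
    and a: "\<not> int p dvd a" "a mod int p \<notin> Q"
      "\<forall>q1\<in>Q. \<forall>q2\<in>Q. (q1 + q2) mod int p \<noteq> a mod int p"
  shows "\<forall>j<3. \<not> sum_nz_powers d p j a"
proof -
  have "\<not> sum_nz_powers d p 1 a"
  proof
    assume "sum_nz_powers d p 1 a"
    then obtain x where "\<not> int p dvd x" "[x ^ d = a] (mod int p)"
      unfolding sum_nz_powers_def by auto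
    then show False
      using powers a(2) by (metis cong_def)
  qed
  moreover have "\<not> sum_nz_powers d p 2 a"
  proof
    assume "sum_nz_powers d p 2 a"
    then obtain x y where "\<not> int p dvd x" "\<not> int p dvd y" "[x ^ d + y ^ d = a] (mod int p)"
      unfolding sum_nz_powers_def by (auto simp: numeral_2_eq_2)
    moreover from this(3) have "(x ^ d mod int p + y ^ d mod int p) mod int p = a mod int p"
      by (simp add: cong_def mod_add_eq)
    ultimately show False
      using powers a(3) by blast
  qed
  ultimately show ?thesis
    using not_sum_nz_powers_0[OF a(1)] by (auto simp: less_Suc_eq numeral_3_eq_3 numeral_2_eq_2)
qed

section \<open>The quadratic character modulo an odd prime\<close>

locale odd_prime =
  fixes p :: nat
  assumes prime_p: "prime p" and p_gt_2: "p > 2"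
begin

abbreviation \<eta> :: "int \<Rightarrow> int" where
  "\<eta> x \<equiv> Legendre x (int p)"

lemma prime_int_p: "prime (int p)"
  using prime_p by simp

lemma coprime_if_not_dvd: "\<not> int p dvd x \<Longrightarrow> coprime x (int p)"
  using prime_imp_coprime[OF prime_int_p] by (simp add: coprime_commute)

lemma not_dvd_if_in_range: "x \<in> {1..<int p} \<Longrightarrow> \<not> int p dvd x"
  using zdvd_imp_le by fastforce

lemma not_dvd_mult: "\<not> int p dvd x \<Longrightarrow> \<not> int p dvd y \<Longrightarrow> \<not> int p dvd (x * y)"
  using prime_dvd_mult_iff[OF prime_int_p] by blast

lemma odd_p: "odd (int p)"
  using prime_odd_nat[OF prime_p p_gt_2] by simp

lemma not_dvd_2: "\<not> int p dvd 2"
  using zdvd_imp_le[of "int p" 2] p_gt_2 by auto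

lemma dvd_power2_iff: "int p dvd x\<^sup>2 \<longleftrightarrow> int p dvd x"
  using prime_dvd_power_iff[OF prime_int_p] by simp

lemma sum_residues_split_0:
  "(\<Sum>x\<in>{0..<int p}. g x) = g 0 + (\<Sum>x\<in>{1..<int p}. g x)"
proof -
  have "{0..<int p} = insert 0 {1..<int p}"
    using p_gt_2 by auto
  then show ?thesis by simp
qed

lemma cong_imp_eq_if_signs:
  assumes "a \<in> {-1,0,1}" "b \<in> {-1,0,1}" "[a = b] (mod int p)"
  shows "a = b"
proof (rule ccontr)
  assume "a \<noteq> b"
  with assms(1,2) have "a - b \<in> {-2,-1,1,2}" by auto
  moreover have "int p dvd a - b"
    using assms(3) by (simp add: cong_iff_dvd_diff)
  ultimately have "int p dvd 2 \<or> int p dvd 1" by auto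
  then show False using not_dvd_2 p_gt_2 by auto
qed

lemma legendre_cong:
  assumes "[x = y] (mod int p)"
  shows "\<eta> x = \<eta> y"
proof -
  have "[x = 0] (mod int p) \<longleftrightarrow> [y = 0] (mod int p)"
    using assms by (meson cong_trans cong_sym)
  moreover have "QuadRes (int p) x \<longleftrightarrow> QuadRes (int p) y"
    unfolding QuadRes_def using assms by (meson cong_trans cong_sym)
  ultimately show ?thesis
    unfolding Legendre_def by simp
qed

lemma legendre_mod: "\<eta> (x mod int p) = \<eta> x"
  by (rule legendre_cong) (simp add: cong_def)

lemma legendre_range: "\<eta> x \<in> {-1,0,1}"
  unfolding Legendre_def by auto

lemma abs_legendre_le_1: "\<bar>\<eta> x\<bar> \<le> 1"
  using legendre_range[of x] by auto

lemma legendre_eq_0_iff: "\<eta> x = 0 \<longleftrightarrow> int p dvd x"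
  unfolding Legendre_def by (auto simp: cong_0_iff)

lemma legendre_0 [simp]: "\<eta> 0 = 0"
  by (simp add: legendre_eq_0_iff)

lemma legendre_eq_1_iff: "\<eta> x = 1 \<longleftrightarrow> \<not> int p dvd x \<and> QuadRes (int p) x"
  unfolding Legendre_def by (auto simp: cong_0_iff)

lemma legendre_eq_minus_1_iff: "\<eta> x = -1 \<longleftrightarrow> \<not> int p dvd x \<and> \<not> QuadRes (int p) x"
  unfolding Legendre_def by (auto simp: cong_0_iff)

lemma legendre_unit: "\<not> int p dvd x \<Longrightarrow> \<eta> x = 1 \<or> \<eta> x = -1"
  using legendre_range[of x] legendre_eq_0_iff[of x] by auto

lemma legendre_mult: "\<eta> (x * y) = \<eta> x * \<eta> y"
proof -
  let ?e = "(p - 1) div 2"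
  have "[\<eta> (x * y) = (x * y) ^ ?e] (mod int p)"
    using euler_criterion[OF prime_p p_gt_2] by blast
  also have "(x * y) ^ ?e = x ^ ?e * y ^ ?e"
    by (simp add: power_mult_distrib)
  also have "[\<dots> = \<eta> x * \<eta> y] (mod int p)"
    using euler_criterion[OF prime_p p_gt_2] by (intro cong_mult) (blast intro: cong_sym)+
  finally have "[\<eta> (x * y) = \<eta> x * \<eta> y] (mod int p)" .
  moreover have "\<eta> x * \<eta> y \<in> {-1,0,1}"
    using legendre_range[of x] legendre_range[of y] by auto
  ultimately show ?thesis
    using cong_imp_eq_if_signs legendre_range by blast
qed

lemma legendre_power2: "\<not> int p dvd x \<Longrightarrow> \<eta> (x\<^sup>2) = 1"
  unfolding legendre_eq_1_iff QuadRes_def dvd_power2_iff by (blast intro: cong_refl)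

lemma legendre_mult_self: "\<not> int p dvd x \<Longrightarrow> \<eta> x * \<eta> x = 1"
  by (drule legendre_unit) auto

lemma legendre_1: "\<eta> 1 = 1"
  using legendre_power2[of 1] p_gt_2 by simp

lemma QuadRes_root_in_range:
  assumes "\<not> int p dvd z" "QuadRes (int p) z"
  obtains r where "r \<in> {1..<int p}" "[r\<^sup>2 = z] (mod int p)"
proof -
  obtain y where y: "[y\<^sup>2 = z] (mod int p)"
    using assms(2) unfolding QuadRes_def by blast
  define r where "r = y mod int p"
  have "[r\<^sup>2 = z] (mod int p)"
    unfolding r_def using y by (metis cong_def power_mod)
  moreover have "r \<noteq> 0"
    using assms(1) calculation cong_dvd_iff by fastforce
  moreover have "0 \<le> r" "r < int p"
    unfolding r_def using p_gt_2 by simp_all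
  ultimately have "r \<in> {1..<int p}" by simp
  then show ?thesis using that \<open>[r\<^sup>2 = z] (mod int p)\<close> by blast
qed

lemma roots_of_square:
  assumes r: "r \<in> {1..<int p}"
  shows "{t \<in> {0..<int p}. [t\<^sup>2 = r\<^sup>2] (mod int p)} = {r, int p - r}"
proof (intro equalityI subsetI)
  fix t assume "t \<in> {t \<in> {0..<int p}. [t\<^sup>2 = r\<^sup>2] (mod int p)}"
  then have t: "0 \<le> t" "t < int p" and "[t\<^sup>2 = r\<^sup>2] (mod int p)" by auto
  then have "int p dvd t\<^sup>2 - r\<^sup>2"
    by (simp add: cong_iff_dvd_diff)
  moreover have "t\<^sup>2 - r\<^sup>2 = (t - r) * (t + r)"
    by (simp add: power2_eq_square algebra_simps)
  ultimately have "int p dvd (t - r) * (t + r)"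
    by simp
  then have "int p dvd t - r \<or> int p dvd t + r"
    using prime_dvd_mult_iff[OF prime_int_p] by blast
  then show "t \<in> {r, int p - r}"
  proof
    assume "int p dvd t - r"
    moreover have "\<bar>t - r\<bar> < int p" using t r by auto
    ultimately have "t - r = 0"
      using dvd_imp_le_int[of "t - r" "int p"] by linarith
    then show ?thesis by simp
  next
    assume "int p dvd t + r"
    then obtain q where q: "t + r = int p * q" by blast
    have pos: "int p > 0" using p_gt_2 by simp
    have "0 < int p * q" "int p * q < int p * 2"
      unfolding q[symmetric] using t r by auto
    then have "0 < q" "q < 2"
      unfolding zero_less_mult_iff mult_less_cancel_left_pos[OF pos] using pos by auto
    then have "q = 1" by simp
    then show ?thesis using q by simp
  qed
next
  fix t assume t: "t \<in> {r, int p - r}"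
  have "(int p - r)\<^sup>2 - r\<^sup>2 = int p * (int p - 2 * r)"
    by (simp add: power2_eq_square algebra_simps)
  then have "[(int p - r)\<^sup>2 = r\<^sup>2] (mod int p)"
    by (simp add: cong_iff_dvd_diff)
  with t r show "t \<in> {t \<in> {0..<int p}. [t\<^sup>2 = r\<^sup>2] (mod int p)}"
    by auto
qed

lemma card_roots:
  "int (card {t \<in> {0..<int p}. [t\<^sup>2 = z] (mod int p)}) = 1 + \<eta> z"
proof (cases "int p dvd z")
  case True
  have "{t \<in> {0..<int p}. [t\<^sup>2 = z] (mod int p)} = {0}"
  proof (intro equalityI subsetI)
    fix t assume "t \<in> {t \<in> {0..<int p}. [t\<^sup>2 = z] (mod int p)}"
    then have "0 \<le> t" "t < int p" "int p dvd t"
      using True cong_dvd_iff dvd_power2_iff by auto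
    then show "t \<in> {0}" using zdvd_imp_le by fastforce
  qed (use True p_gt_2 in \<open>auto simp: cong_def dvd_eq_mod_eq_0\<close>)
  then show ?thesis using True legendre_eq_0_iff by simp
next
  case False
  show ?thesis
  proof (cases "QuadRes (int p) z")
    case True
    obtain r where r: "r \<in> {1..<int p}" "[r\<^sup>2 = z] (mod int p)"
      using QuadRes_root_in_range[OF False True] .
    have "[t\<^sup>2 = z] (mod int p) \<longleftrightarrow> [t\<^sup>2 = r\<^sup>2] (mod int p)" for t
      using r(2) by (meson cong_sym cong_trans)
    then have "{t \<in> {0..<int p}. [t\<^sup>2 = z] (mod int p)} = {r, int p - r}"
      using roots_of_square[OF r(1)] by simp
    moreover have "r \<noteq> int p - r"
      using odd_p by presburger
    ultimately show ?thesis
      using False True legendre_eq_1_iff by simp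
  next
    case nonres: False
    have no_roots: "{t \<in> {0..<int p}. [t\<^sup>2 = z] (mod int p)} = {}"
      using nonres unfolding QuadRes_def by blast
    have "\<eta> z = -1"
      using False nonres legendre_eq_minus_1_iff by simp
    then show ?thesis unfolding no_roots by simp
  qed
qed

lemma card_roots_le_2: "card {t \<in> {0..<int p}. [t\<^sup>2 = z] (mod int p)} \<le> 2"
  using card_roots[of z] legendre_range[of z] by auto

lemma sum_over_squares:
  fixes g :: "int \<Rightarrow> int"
  shows "(\<Sum>t\<in>{0..<int p}. g (t\<^sup>2 mod int p)) = (\<Sum>z\<in>{0..<int p}. (1 + \<eta> z) * g z)"
proof -
  let ?roots = "\<lambda>z. {t \<in> {0..<int p}. [t\<^sup>2 = z] (mod int p)}"
  have "(\<lambda>t. t\<^sup>2 mod int p) ` {0..<int p} \<subseteq> {0..<int p}"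
    using p_gt_2 by auto
  then have "(\<Sum>t\<in>{0..<int p}. g (t\<^sup>2 mod int p)) =
      (\<Sum>z\<in>{0..<int p}. \<Sum>t\<in>{t \<in> {0..<int p}. t\<^sup>2 mod int p = z}. g (t\<^sup>2 mod int p))"
    by (rule sum.group[symmetric, rotated 2]) simp_all
  also have "\<dots> = (\<Sum>z\<in>{0..<int p}. \<Sum>t\<in>?roots z. g z)"
    by (intro sum.cong) (auto simp: cong_def)
  also have "\<dots> = (\<Sum>z\<in>{0..<int p}. int (card (?roots z)) * g z)"
    by simp
  also have "\<dots> = (\<Sum>z\<in>{0..<int p}. (1 + \<eta> z) * g z)"
    by (simp only: card_roots)
  finally show ?thesis .
qed

lemma sum_legendre: "(\<Sum>x\<in>{0..<int p}. \<eta> x) = 0"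
  using sum_over_squares[of "\<lambda>_. 1"] by (simp add: sum.distrib)

lemma exists_nonresidue: "\<exists>n\<in>{1..<int p}. \<eta> n = -1"
proof (rule ccontr)
  assume "\<not> ?thesis"
  then have nonneg: "\<eta> x \<ge> 0" if "x \<in> {1..<int p}" for x
    using that legendre_range[of x] by auto
  have "1 \<in> {1..<int p}" using p_gt_2 by simp
  then have "\<eta> 1 \<le> (\<Sum>x\<in>{1..<int p}. \<eta> x)"
    by (intro member_le_sum nonneg) auto
  then show False
    using sum_legendre sum_residues_split_0[of \<eta>] legendre_1 by simp
qed

lemma sum_affine_reindex:
  assumes c: "\<not> int p dvd c"
  shows "(\<Sum>x\<in>{0..<int p}. g ((c * x + d) mod int p)) = (\<Sum>x\<in>{0..<int p}. g x)"
proof -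
  let ?h = "\<lambda>x. (c * x + d) mod int p"
  have "inj_on ?h {0..<int p}"
  proof (rule inj_onI)
    fix x y assume "x \<in> {0..<int p}" "y \<in> {0..<int p}" "?h x = ?h y"
    moreover from \<open>?h x = ?h y\<close> have "[c * x + d = c * y + d] (mod int p)"
      by (simp add: cong_def)
    then have "[c * x = c * y] (mod int p)"
      by (simp add: cong_add_rcancel)
    then have "[x = y] (mod int p)"
      using cong_mult_lcancel[OF coprime_if_not_dvd[OF c]] by blast
    ultimately show "x = y" by (simp add: cong_def)
  qed
  moreover have "?h ` {0..<int p} \<subseteq> {0..<int p}"
    using p_gt_2 by auto
  ultimately have "bij_betw ?h {0..<int p} {0..<int p}"
    by (simp add: bij_betw_def endo_inj_surj)
  from sum.reindex_bij_betw[OF this] show ?thesis .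
qed

lemma modular_inverse_in_range:
  "x \<in> {1..<int p} \<Longrightarrow> modular_inverse (int p) x \<in> {1..<int p}"
  using mult_modular_inverse_int_pos[of "int p" x] modular_inverse_int_less[of "int p" x]
    coprime_if_not_dvd[OF not_dvd_if_in_range] p_gt_2 by fastforce

lemma modular_inverse_involution:
  assumes "x \<in> {1..<int p}"
  shows "modular_inverse (int p) (modular_inverse (int p) x) = x"
  using assms coprime_if_not_dvd[OF not_dvd_if_in_range[OF assms]]
  by (intro modular_inverse_int_eqI) (auto intro: cong_modular_inverse2)

lemma bij_betw_modular_inverse:
  "bij_betw (modular_inverse (int p)) {1..<int p} {1..<int p}"
proof (rule bij_betwI)
  show "modular_inverse (int p) \<in> {1..<int p} \<rightarrow> {1..<int p}"
    using modular_inverse_in_range by blast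
qed (use modular_inverse_in_range modular_inverse_involution in blast)+

lemma sum_legendre_times_shift:
  "(\<Sum>x\<in>{0..<int p}. \<eta> (x * (x + e))) = (if int p dvd e then int p - 1 else -1)"
proof (cases "int p dvd e")
  case True
  have "\<eta> (x * (x + e)) = \<eta> (x\<^sup>2)" for x
    using True by (intro legendre_cong) (auto simp: cong_iff_dvd_diff algebra_simps power2_eq_square)
  then have "(\<Sum>x\<in>{0..<int p}. \<eta> (x * (x + e))) = (\<Sum>x\<in>{1..<int p}. 1)"
    using sum_residues_split_0[of "\<lambda>x. \<eta> (x\<^sup>2)"]
    by (simp add: legendre_power2 not_dvd_if_in_range)
  then show ?thesis using True p_gt_2 by simp
next
  case False
  let ?inv = "modular_inverse (int p)"
  have "(\<Sum>x\<in>{0..<int p}. \<eta> (x * (x + e))) = (\<Sum>x\<in>{1..<int p}. \<eta> (x * (x + e)))"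
    using sum_residues_split_0[of "\<lambda>x. \<eta> (x * (x + e))"] by simp
  also have "\<dots> = (\<Sum>x\<in>{1..<int p}. \<eta> (1 + e * ?inv x))"
  proof (rule sum.cong[OF refl])
    fix x assume x: "x \<in> {1..<int p}"
    have inv: "[x * ?inv x = 1] (mod int p)"
      using x by (intro cong_modular_inverse1 coprime_if_not_dvd not_dvd_if_in_range)
    have "\<eta> (x * (x + e)) = \<eta> (x * (x + e)) * \<eta> ((?inv x)\<^sup>2)"
      using legendre_power2 not_dvd_if_in_range modular_inverse_in_range x by simp
    also have "\<dots> = \<eta> ((x * ?inv x) * (x * ?inv x + e * ?inv x))"
      by (simp add: legendre_mult [symmetric] power2_eq_square algebra_simps)
    also have "\<dots> = \<eta> (1 * (1 + e * ?inv x))"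
      by (intro legendre_cong cong_mult cong_add cong_refl inv)
    finally show "\<eta> (x * (x + e)) = \<eta> (1 + e * ?inv x)" by simp
  qed
  also have "\<dots> = (\<Sum>v\<in>{1..<int p}. \<eta> (1 + e * v))"
    using sum.reindex_bij_betw[OF bij_betw_modular_inverse] .
  also have "\<dots> = (\<Sum>v\<in>{0..<int p}. \<eta> ((e * v + 1) mod int p)) - 1"
    using sum_residues_split_0[of "\<lambda>v. \<eta> (1 + e * v)"] legendre_1
    by (simp add: legendre_mod add.commute)
  also have "\<dots> = -1"
    using sum_affine_reindex[OF False, of \<eta> 1] sum_legendre by simp
  finally show ?thesis using False by simp
qed

lemma sum_legendre_shifted_product:
  "(\<Sum>b\<in>{0..<int p}. \<eta> ((b + c) * (b + d))) = (if [c = d] (mod int p) then int p - 1 else -1)"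
proof -
  let ?g = "\<lambda>u. \<eta> (u * (u + (c - d)))"
  have "\<eta> ((b + c) * (b + d)) = ?g ((1 * b + d) mod int p)" for b
  proof -
    have "\<eta> ((b + c) * (b + d)) = \<eta> ((b + d) * ((b + d) + (c - d)))"
      by (rule arg_cong[where f = \<eta>]) (simp add: algebra_simps)
    also have "\<dots> = ?g ((1 * b + d) mod int p)"
      by (intro legendre_cong cong_mult cong_add cong_refl) (simp_all add: cong_def)
    finally show ?thesis .
  qed
  then have "(\<Sum>b\<in>{0..<int p}. \<eta> ((b + c) * (b + d))) = (\<Sum>u\<in>{0..<int p}. ?g u)"
    using sum_affine_reindex[of 1 ?g d] p_gt_2 by simp
  also have "\<dots> = (if [c = d] (mod int p) then int p - 1 else -1)"
    unfolding sum_legendre_times_shift by (simp add: cong_iff_dvd_diff)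
  finally show ?thesis .
qed

definition jacobsthal :: "int \<Rightarrow> int" where
  "jacobsthal b = (\<Sum>x\<in>{0..<int p}. \<eta> x * \<eta> (x\<^sup>2 + b))"

lemma jacobsthal_cong: "[b = b'] (mod int p) \<Longrightarrow> jacobsthal b = jacobsthal b'"
  unfolding jacobsthal_def
  by (intro sum.cong refl arg_cong2[where f = "(*)"] legendre_cong cong_add) auto

lemma jacobsthal_0: "jacobsthal 0 = 0"
proof -
  have self: "\<eta> x * \<eta> (x\<^sup>2) = \<eta> x" for x
    by (cases "int p dvd x") (simp_all add: legendre_power2 legendre_eq_0_iff)
  show ?thesis
    unfolding jacobsthal_def add_0_right self by (rule sum_legendre)
qed

lemma jacobsthal_scale:
  assumes t: "\<not> int p dvd t"
  shows "jacobsthal (b * t\<^sup>2) = \<eta> t * jacobsthal b"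
proof -
  let ?g = "\<lambda>u. \<eta> u * \<eta> (u\<^sup>2 + b * t\<^sup>2)"
  have "jacobsthal (b * t\<^sup>2) = (\<Sum>x\<in>{0..<int p}. ?g ((t * x + 0) mod int p))"
    unfolding jacobsthal_def by (rule sum_affine_reindex[OF t, symmetric])
  also have "\<dots> = (\<Sum>x\<in>{0..<int p}. \<eta> t * (\<eta> x * \<eta> (x\<^sup>2 + b)))"
  proof (rule sum.cong[OF refl])
    fix x
    have "?g ((t * x + 0) mod int p) = \<eta> (t * x) * \<eta> ((t * x)\<^sup>2 + b * t\<^sup>2)"
      by (intro arg_cong2[where f = "(*)"] legendre_cong cong_add cong_pow cong_refl)
        (simp_all add: cong_def)
    also have "(t * x)\<^sup>2 + b * t\<^sup>2 = t\<^sup>2 * (x\<^sup>2 + b)"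
      by (simp add: algebra_simps power2_eq_square)
    finally show "?g ((t * x + 0) mod int p) = \<eta> t * (\<eta> x * \<eta> (x\<^sup>2 + b))"
      using legendre_power2[OF t] by (simp add: legendre_mult)
  qed
  finally show ?thesis
    unfolding jacobsthal_def by (simp add: sum_distrib_left)
qed

lemma root_if_legendre_eq_1:
  assumes "\<eta> z = 1"
  obtains s where "[s\<^sup>2 = z] (mod int p)" "\<not> int p dvd s"
  using assms unfolding legendre_eq_1_iff
  by (metis QuadRes_root_in_range not_dvd_if_in_range)

text \<open>With \<open>s\<^sup>2 = 2w(w\<^sup>2 + a)\<close> and \<open>t\<^sup>2 = 2iw(w\<^sup>2 - a)\<close> one gets
  \<open>s\<^sup>4 + t\<^sup>4 = 4w\<^sup>2((w\<^sup>2 + a)\<^sup>2 - (w\<^sup>2 - a)\<^sup>2) = (2w)\<^sup>4 a\<close>.\<close>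
lemma sum_two_fourth_powers_if_residues:
  assumes i: "[i\<^sup>2 = -1] (mod int p)" and w: "\<not> int p dvd w"
    and plus: "\<eta> (2 * w * (w\<^sup>2 + a)) = 1" and minus: "\<eta> (2 * i * w * (w\<^sup>2 - a)) = 1"
  shows "sum_nz_powers 4 p 2 a"
proof -
  obtain s where s: "[s\<^sup>2 = 2 * w * (w\<^sup>2 + a)] (mod int p)" "\<not> int p dvd s"
    using root_if_legendre_eq_1[OF plus] .
  obtain t where t: "[t\<^sup>2 = 2 * i * w * (w\<^sup>2 - a)] (mod int p)" "\<not> int p dvd t"
    using root_if_legendre_eq_1[OF minus] .
  define m where "m = modular_inverse (int p) (2 * w)"
  have "\<not> int p dvd 2 * w"
    using not_dvd_mult[OF not_dvd_2 w] .
  then have m: "[2 * w * m = 1] (mod int p)"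
    unfolding m_def by (intro cong_modular_inverse1 coprime_if_not_dvd)
  then have "\<not> int p dvd m"
    using cong_dvd_iff[OF m] p_gt_2 by auto
  have "(s * m) ^ 4 + (t * m) ^ 4 = m ^ 4 * ((s\<^sup>2)\<^sup>2 + (t\<^sup>2)\<^sup>2)"
    by (simp add: power_mult_distrib power2_eq_square power4_eq_xxxx algebra_simps)
  also have "[\<dots> = m ^ 4 * ((2 * w * (w\<^sup>2 + a))\<^sup>2 + (2 * i * w * (w\<^sup>2 - a))\<^sup>2)] (mod int p)"
    by (intro cong_add cong_mult cong_refl cong_pow s(1) t(1))
  also have "m ^ 4 * ((2 * w * (w\<^sup>2 + a))\<^sup>2 + (2 * i * w * (w\<^sup>2 - a))\<^sup>2)
      = m ^ 4 * (4 * w\<^sup>2 * (w\<^sup>2 + a)\<^sup>2 + i\<^sup>2 * (4 * w\<^sup>2 * (w\<^sup>2 - a)\<^sup>2))"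
    by (simp add: power_mult_distrib power2_eq_square algebra_simps)
  also have "[\<dots> = m ^ 4 * (4 * w\<^sup>2 * (w\<^sup>2 + a)\<^sup>2 + (-1) * (4 * w\<^sup>2 * (w\<^sup>2 - a)\<^sup>2))] (mod int p)"
    by (intro cong_add cong_mult cong_refl i)
  also have "m ^ 4 * (4 * w\<^sup>2 * (w\<^sup>2 + a)\<^sup>2 + (-1) * (4 * w\<^sup>2 * (w\<^sup>2 - a)\<^sup>2)) = (2 * w * m) ^ 4 * a"
    by (simp add: power_mult_distrib power2_eq_square power4_eq_xxxx algebra_simps)
  also have "[\<dots> = 1 ^ 4 * a] (mod int p)"
    by (intro cong_mult cong_refl cong_pow m)
  finally have "[(\<Sum>x\<leftarrow>[s * m, t * m]. x ^ 4) = a] (mod int p)"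
    by simp
  moreover have "\<forall>x\<in>set [s * m, t * m]. \<not> int p dvd x"
    using s(2) t(2) \<open>\<not> int p dvd m\<close> by (simp add: not_dvd_mult)
  ultimately show ?thesis
    using sum_nz_powers_of_list[where xs = "[s * m, t * m]" and p = p and d = 4 and a = a]
    by (simp add: numeral_2_eq_2)
qed

lemma exists_not_sum_nz_powers_below_2: "\<exists>b\<in>{1..int p - 1}. \<forall>j<2. \<not> sum_nz_powers 4 p j b"
proof -
  obtain n where n: "n \<in> {1..<int p}" "\<eta> n = -1"
    using exists_nonresidue by blast
  have "\<not> sum_nz_powers 4 p 1 n"
  proof
    assume "sum_nz_powers 4 p 1 n"
    then obtain x where "[(x\<^sup>2)\<^sup>2 = n] (mod int p)"
      unfolding sum_nz_powers_def by (auto simp flip: power_mult)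
    then have "QuadRes (int p) n"
      unfolding QuadRes_def by blast
    then show False
      using n(2) legendre_eq_minus_1_iff by simp
  qed
  moreover have "\<not> sum_nz_powers 4 p 0 n"
    using not_sum_nz_powers_0 not_dvd_if_in_range[OF n(1)] by blast
  ultimately show ?thesis
    using n(1) by (auto simp: less_2_cases_iff)
qed

end

section \<open>Two fourth powers modulo a prime \<open>p \<equiv> 1 (mod 4)\<close>\<close>

lemma sum_abs_less_if_squares_le:
  fixes u v w P :: int
  assumes "u\<^sup>2 \<le> 4 * P" "v\<^sup>2 \<le> 4 * P" "w\<^sup>2 \<le> 4 * P" "P \<ge> 61"
  shows "\<bar>u\<bar> + \<bar>v\<bar> + \<bar>w\<bar> < P - 14"
proof -
  let ?S = "\<bar>u\<bar> + \<bar>v\<bar> + \<bar>w\<bar>"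
  have "3 * (u\<^sup>2 + v\<^sup>2 + w\<^sup>2) - ?S\<^sup>2 = (\<bar>u\<bar> - \<bar>v\<bar>)\<^sup>2 + (\<bar>v\<bar> - \<bar>w\<bar>)\<^sup>2 + (\<bar>u\<bar> - \<bar>w\<bar>)\<^sup>2"
    by (simp add: power2_eq_square algebra_simps)
  then have "?S\<^sup>2 \<le> 3 * (u\<^sup>2 + v\<^sup>2 + w\<^sup>2)"
    by (smt (verit) zero_le_power2)
  also have "\<dots> \<le> 36 * P"
    using add_mono[OF add_mono[OF assms(1) assms(2)] assms(3)] by simp
  also have "\<dots> < (P - 14)\<^sup>2"
  proof -
    have "(P - 14)\<^sup>2 - 36 * P = (P - 61) * (P - 3) + 13"
      by (simp add: power2_eq_square algebra_simps)
    moreover have "(P - 61) * (P - 3) \<ge> 0"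
      using assms(4) by simp
    ultimately show ?thesis by linarith
  qed
  finally show ?thesis
    using assms(4) by (simp add: power_less_imp_less_base)
qed

locale pythagorean_prime = odd_prime +
  assumes p_mod_4: "p mod 4 = 1"
begin

lemma legendre_minus_1: "\<eta> (-1) = 1"
proof -
  have "even ((p - 1) div 2)"
    using p_mod_4 by presburger
  then have "[\<eta> (-1) = 1] (mod int p)"
    using euler_criterion[OF prime_p p_gt_2, of "-1"] by simp
  then show ?thesis
    using cong_imp_eq_if_signs legendre_range by blast
qed

lemma legendre_uminus: "\<eta> (- x) = \<eta> x"
  using legendre_mult[of "-1" x] legendre_minus_1 by simp

lemma sqrt_minus_1:
  obtains i where "[i\<^sup>2 = -1] (mod int p)" "\<not> int p dvd i"
proof -
  obtain i where i: "[i\<^sup>2 = -1] (mod int p)"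
    using legendre_minus_1 unfolding legendre_eq_1_iff QuadRes_def by blast
  then have "\<not> int p dvd i"
    using cong_dvd_iff[OF i] dvd_power2_iff p_gt_2 by auto
  with i show ?thesis by (rule that)
qed

lemma sum_legendre_over_roots:
  assumes x: "x \<in> {0..<int p}"
  shows "(\<Sum>y\<in>{0..<int p}. if [y\<^sup>2 = x\<^sup>2] (mod int p) then \<eta> x * \<eta> y else 0)
         = (if x = 0 then 0 else 2)"
proof (cases "x = 0")
  case True
  then show ?thesis by (simp add: sum.neutral)
next
  case False
  then have x1: "x \<in> {1..<int p}" using x by auto
  have "(\<Sum>y\<in>{0..<int p}. if [y\<^sup>2 = x\<^sup>2] (mod int p) then \<eta> x * \<eta> y else 0)
      = (\<Sum>y\<in>{y \<in> {0..<int p}. [y\<^sup>2 = x\<^sup>2] (mod int p)}. \<eta> x * \<eta> y)"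
    by (rule sum.inter_filter[symmetric]) simp
  also have "\<dots> = (\<Sum>y\<in>{x, int p - x}. \<eta> x * \<eta> y)"
    by (simp only: roots_of_square[OF x1])
  also have "\<dots> = \<eta> x * \<eta> x + \<eta> x * \<eta> (int p - x)"
  proof -
    have "x \<noteq> int p - x" using odd_p by presburger
    then show ?thesis by simp
  qed
  also have "\<eta> (int p - x) = \<eta> x"
    using legendre_cong[of "int p - x" "- x"] legendre_uminus by (simp add: cong_iff_dvd_diff)
  finally show ?thesis
    using legendre_mult_self[OF not_dvd_if_in_range[OF x1]] False by simp
qed

lemma sum_jacobsthal_squared:
  "(\<Sum>b\<in>{0..<int p}. (jacobsthal b)\<^sup>2) = 2 * (int p - 1) * int p"
proof -
  let ?R = "{0..<int p}"
  let ?E = "\<lambda>x y. if [y\<^sup>2 = x\<^sup>2] (mod int p) then \<eta> x * \<eta> y else 0"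
  have "(jacobsthal b)\<^sup>2
      = (\<Sum>x\<in>?R. \<Sum>y\<in>?R. \<eta> x * \<eta> y * \<eta> ((b + x\<^sup>2) * (b + y\<^sup>2)))" for b
  proof -
    have "(jacobsthal b)\<^sup>2
        = (\<Sum>x\<in>?R. \<Sum>y\<in>?R. (\<eta> x * \<eta> (x\<^sup>2 + b)) * (\<eta> y * \<eta> (y\<^sup>2 + b)))"
      unfolding jacobsthal_def power2_eq_square by (rule sum_product)
    also have "\<dots> = (\<Sum>x\<in>?R. \<Sum>y\<in>?R. \<eta> x * \<eta> y * \<eta> ((b + x\<^sup>2) * (b + y\<^sup>2)))"
      by (intro sum.cong refl) (simp add: legendre_mult add.commute mult.assoc mult.left_commute)
    finally show ?thesis .
  qed
  then have "(\<Sum>b\<in>?R. (jacobsthal b)\<^sup>2)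
      = (\<Sum>b\<in>?R. \<Sum>x\<in>?R. \<Sum>y\<in>?R. \<eta> x * \<eta> y * \<eta> ((b + x\<^sup>2) * (b + y\<^sup>2)))"
    by simp
  also have "\<dots> = (\<Sum>x\<in>?R. \<Sum>b\<in>?R. \<Sum>y\<in>?R. \<eta> x * \<eta> y * \<eta> ((b + x\<^sup>2) * (b + y\<^sup>2)))"
    by (rule sum.swap)
  also have "\<dots> = (\<Sum>x\<in>?R. \<Sum>y\<in>?R. \<Sum>b\<in>?R. \<eta> x * \<eta> y * \<eta> ((b + x\<^sup>2) * (b + y\<^sup>2)))"
    by (intro sum.cong refl sum.swap)
  also have "\<dots> = (\<Sum>x\<in>?R. \<Sum>y\<in>?R. int p * ?E x y - \<eta> x * \<eta> y)"
    unfolding sum_distrib_left[symmetric] sum_legendre_shifted_product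
    by (intro sum.cong refl) (auto simp: cong_sym_eq algebra_simps)
  also have "\<dots> = int p * (\<Sum>x\<in>?R. \<Sum>y\<in>?R. ?E x y) - (\<Sum>x\<in>?R. \<Sum>y\<in>?R. \<eta> x * \<eta> y)"
    by (simp add: sum_subtractf sum_distrib_left)
  also have "(\<Sum>x\<in>?R. \<Sum>y\<in>?R. \<eta> x * \<eta> y) = 0"
    using sum_product[of \<eta> ?R \<eta> ?R] sum_legendre by simp
  also have "(\<Sum>x\<in>?R. \<Sum>y\<in>?R. ?E x y) = (\<Sum>x\<in>?R. if x = 0 then 0 else 2)"
    by (intro sum.cong refl sum_legendre_over_roots)
  also have "\<dots> = 2 * (int p - 1)"
    using sum_residues_split_0[of "\<lambda>x. if x = 0 then 0 else (2::int)"] p_gt_2 by simp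
  finally show ?thesis by simp
qed

lemma jacobsthal_squared_le: "(jacobsthal b)\<^sup>2 \<le> 4 * int p"
proof (cases "int p dvd b")
  case True
  then have "jacobsthal b = 0"
    using jacobsthal_cong[of b 0] jacobsthal_0 by (simp add: cong_0_iff)
  then show ?thesis by simp
next
  case False
  let ?R = "{0..<int p}"
  let ?H = "\<lambda>z. (jacobsthal (b * z))\<^sup>2"
  have "(int p - 1) * (jacobsthal b)\<^sup>2 = (\<Sum>t\<in>{1..<int p}. ?H (t\<^sup>2))"
  proof -
    have "?H (t\<^sup>2) = (jacobsthal b)\<^sup>2" if "t \<in> {1..<int p}" for t
      using jacobsthal_scale[OF not_dvd_if_in_range[OF that]]
        legendre_mult_self[OF not_dvd_if_in_range[OF that]]
      by (simp add: power2_eq_square algebra_simps)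
    then show ?thesis using p_gt_2 by simp
  qed
  also have "\<dots> = (\<Sum>t\<in>?R. ?H (t\<^sup>2 mod int p))"
    using sum_residues_split_0[of "\<lambda>t. ?H (t\<^sup>2 mod int p)"] jacobsthal_0
    by (simp add: jacobsthal_cong[OF cong_mult[OF cong_refl cong_mod_leftI[OF cong_refl]]])
  also have "\<dots> = (\<Sum>z\<in>?R. (1 + \<eta> z) * ?H z)"
    by (rule sum_over_squares)
  also have "\<dots> \<le> (\<Sum>z\<in>?R. 2 * ?H z)"
    using abs_legendre_le_1 by (intro sum_mono mult_right_mono) (auto simp: abs_le_iff)
  also have "\<dots> = 2 * (\<Sum>z\<in>?R. (jacobsthal ((b * z + 0) mod int p))\<^sup>2)"
    by (simp add: sum_distrib_left jacobsthal_cong[OF cong_mod_leftI[OF cong_refl]])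
  also have "\<dots> = 2 * (2 * (int p - 1) * int p)"
    using sum_affine_reindex[OF False, of "\<lambda>u. (jacobsthal u)\<^sup>2" 0] sum_jacobsthal_squared by simp
  finally have "(int p - 1) * (jacobsthal b)\<^sup>2 \<le> (int p - 1) * (4 * int p)"
    by (simp add: algebra_simps)
  moreover have "int p - 1 > 0" using p_gt_2 by simp
  ultimately show ?thesis by simp
qed

lemma sum_legendre_diff_squares:
  assumes a: "\<not> int p dvd a"
  shows "(\<Sum>z\<in>{0..<int p}. \<eta> z * \<eta> (z * (z\<^sup>2 - a\<^sup>2))) = -2"
proof -
  have "\<not> [- a = a] (mod int p)"
  proof
    assume "[- a = a] (mod int p)"
    then have "int p dvd 2 * a"
      by (simp add: cong_iff_dvd_diff dvd_minus_iff flip: mult_2)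
    then show False
      using not_dvd_mult[OF not_dvd_2 a] by simp
  qed
  then have sum: "(\<Sum>z\<in>{0..<int p}. \<eta> ((z + - a) * (z + a))) = -1"
    using sum_legendre_shifted_product[of "- a" a] by simp
  have "\<eta> z * \<eta> (z * (z\<^sup>2 - a\<^sup>2)) = \<eta> ((z + - a) * (z + a))" if "z \<in> {1..<int p}" for z
  proof -
    have "z * (z\<^sup>2 - a\<^sup>2) = z * ((z + - a) * (z + a))"
      by (simp add: power2_eq_square algebra_simps)
    then have "\<eta> z * \<eta> (z * (z\<^sup>2 - a\<^sup>2)) = (\<eta> z * \<eta> z) * \<eta> ((z + - a) * (z + a))"
      by (simp only: legendre_mult mult.assoc)
    then show ?thesis
      using legendre_mult_self[OF not_dvd_if_in_range[OF that]] by simp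
  qed
  then have "(\<Sum>z\<in>{0..<int p}. \<eta> z * \<eta> (z * (z\<^sup>2 - a\<^sup>2)))
      = (\<Sum>z\<in>{0..<int p}. \<eta> ((z + - a) * (z + a))) - \<eta> (- (a * a))"
    using sum_residues_split_0[of "\<lambda>z. \<eta> z * \<eta> (z * (z\<^sup>2 - a\<^sup>2))"]
      sum_residues_split_0[of "\<lambda>z. \<eta> ((z + - a) * (z + a))"] by simp
  also have "\<eta> (- (a * a)) = 1"
    using legendre_mult_self[OF a] by (simp add: legendre_uminus legendre_mult)
  finally show ?thesis
    using sum by simp
qed

text \<open>The summand is \<open>4\<close> when both arguments are nonzero squares, \<open>0\<close> when one of
  them is a non-residue and the other is not divisible by \<open>p\<close>.\<close>
definition pair_count :: "int \<Rightarrow> int \<Rightarrow> int" where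
  "pair_count i a =
     (\<Sum>w\<in>{0..<int p}. (1 + \<eta> (2 * w * (w\<^sup>2 + a))) * (1 + \<eta> (2 * i * w * (w\<^sup>2 - a))))"

lemma pair_count_eq:
  assumes a: "\<not> int p dvd a"
  shows "pair_count i a = int p + \<eta> 2 * jacobsthal a + \<eta> (2 * i) * jacobsthal (- a)
           + \<eta> i * (jacobsthal (- (a\<^sup>2)) - 2)"
proof -
  let ?R = "{0..<int p}"
  let ?X = "\<lambda>w. \<eta> (2 * w * (w\<^sup>2 + a))"
  let ?Y = "\<lambda>w. \<eta> (2 * i * w * (w\<^sup>2 - a))"
  let ?G = "\<lambda>z. \<eta> (z * (z\<^sup>2 - a\<^sup>2))"
  have split: "pair_count i a
      = (\<Sum>w\<in>?R. 1) + (\<Sum>w\<in>?R. ?X w) + (\<Sum>w\<in>?R. ?Y w) + (\<Sum>w\<in>?R. ?X w * ?Y w)"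
    unfolding pair_count_def by (simp add: sum.distrib algebra_simps)
  have X: "(\<Sum>w\<in>?R. ?X w) = \<eta> 2 * jacobsthal a"
    unfolding jacobsthal_def sum_distrib_left by (intro sum.cong refl) (simp add: legendre_mult)
  have Y: "(\<Sum>w\<in>?R. ?Y w) = \<eta> (2 * i) * jacobsthal (- a)"
    unfolding jacobsthal_def sum_distrib_left
  proof (intro sum.cong refl)
    fix w
    have "2 * i * w * (w\<^sup>2 - a) = (2 * i) * (w * (w\<^sup>2 + - a))" by simp
    then show "?Y w = \<eta> (2 * i) * (\<eta> w * \<eta> (w\<^sup>2 + - a))"
      by (simp only: legendre_mult)
  qed
  have "?X w * ?Y w = \<eta> i * ?G (w\<^sup>2 mod int p)" for w
  proof -
    have "?X w * ?Y w = \<eta> (i * (2\<^sup>2 * (w\<^sup>2 * ((w\<^sup>2)\<^sup>2 - a\<^sup>2))))"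
      by (simp add: legendre_mult [symmetric] power2_eq_square algebra_simps)
    also have "\<dots> = \<eta> i * \<eta> (w\<^sup>2 * ((w\<^sup>2)\<^sup>2 - a\<^sup>2))"
      using legendre_power2[OF not_dvd_2] by (simp only: legendre_mult)
    also have "\<eta> (w\<^sup>2 * ((w\<^sup>2)\<^sup>2 - a\<^sup>2)) = ?G (w\<^sup>2 mod int p)"
      by (intro legendre_cong cong_mult cong_diff cong_pow cong_refl) (simp_all add: cong_def)
    finally show ?thesis .
  qed
  then have "(\<Sum>w\<in>?R. ?X w * ?Y w) = \<eta> i * (\<Sum>w\<in>?R. ?G (w\<^sup>2 mod int p))"
    by (simp add: sum_distrib_left)
  also have "\<dots> = \<eta> i * (\<Sum>z\<in>?R. (1 + \<eta> z) * ?G z)"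
    by (simp only: sum_over_squares[of ?G])
  finally have XY: "(\<Sum>w\<in>?R. ?X w * ?Y w) = \<eta> i * (\<Sum>z\<in>?R. (1 + \<eta> z) * ?G z)" .
  have G: "(\<Sum>z\<in>?R. (1 + \<eta> z) * ?G z) = jacobsthal (- (a\<^sup>2)) - 2"
  proof -
    have "(\<Sum>z\<in>?R. ?G z) = jacobsthal (- (a\<^sup>2))"
      unfolding jacobsthal_def by (intro sum.cong refl) (simp add: legendre_mult)
    then show ?thesis
      using sum_legendre_diff_squares[OF a] by (simp add: sum.distrib algebra_simps)
  qed
  show ?thesis
    unfolding split X Y XY G by simp
qed

lemma pair_count_le_12:
  assumes i: "\<not> int p dvd i"
    and no_witness: "\<And>w. \<not> int p dvd w \<Longrightarrow>
      \<not> (\<eta> (2 * w * (w\<^sup>2 + a)) = 1 \<and> \<eta> (2 * i * w * (w\<^sup>2 - a)) = 1)"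
  shows "pair_count i a \<le> 12"
proof -
  let ?R = "{0..<int p}"
  let ?X = "\<lambda>w. 2 * w * (w\<^sup>2 + a)"
  let ?Y = "\<lambda>w. 2 * i * w * (w\<^sup>2 - a)"
  let ?D = "\<lambda>w. int p dvd ?X w \<or> int p dvd ?Y w"
  let ?roots = "\<lambda>z. {t \<in> ?R. [t\<^sup>2 = z] (mod int p)}"
  have summand_le: "(1 + \<eta> (?X w)) * (1 + \<eta> (?Y w)) \<le> (if ?D w then 2 else 0)" for w
  proof (cases "?D w")
    case True
    then have "\<eta> (?X w) = 0 \<or> \<eta> (?Y w) = 0"
      unfolding legendre_eq_0_iff .
    then show ?thesis
      using True abs_legendre_le_1[of "?X w"] abs_legendre_le_1[of "?Y w"] by (auto simp: abs_le_iff)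
  next
    case False
    then have "\<not> int p dvd w"
      by (metis dvd_mult dvd_mult2)
    then have "\<eta> (?X w) = -1 \<or> \<eta> (?Y w) = -1"
      using no_witness legendre_unit[of "?X w"] legendre_unit[of "?Y w"] False by blast
    then show ?thesis
      using False by auto
  qed
  have "{w \<in> ?R. ?D w} \<subseteq> ?roots 0 \<union> ?roots (- a) \<union> ?roots a"
  proof
    fix w assume w: "w \<in> {w \<in> ?R. ?D w}"
    then have "int p dvd w \<or> int p dvd (w\<^sup>2 + a) \<or> int p dvd (w\<^sup>2 - a)"
      using prime_dvd_mult_iff[OF prime_int_p] not_dvd_2 i by auto
    then have "[w\<^sup>2 = 0] (mod int p) \<or> [w\<^sup>2 = - a] (mod int p) \<or> [w\<^sup>2 = a] (mod int p)"
      by (auto simp: cong_iff_dvd_diff dvd_power2_iff)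
    then show "w \<in> ?roots 0 \<union> ?roots (- a) \<union> ?roots a"
      using w by auto
  qed
  moreover have "finite (?roots z)" for z
    by (rule finite_subset[of _ ?R]) auto
  ultimately have "card {w \<in> ?R. ?D w} \<le> card (?roots 0 \<union> ?roots (- a) \<union> ?roots a)"
    by (intro card_mono finite_UnI)
  also have "\<dots> \<le> card (?roots 0) + card (?roots (- a)) + card (?roots a)"
    by (meson card_Un_le add_right_mono order_trans)
  also have "\<dots> \<le> 6"
    using card_roots_le_2[of 0] card_roots_le_2[of "- a"] card_roots_le_2[of a] by linarith
  finally have card_le: "card {w \<in> ?R. ?D w} \<le> 6" .
  have "pair_count i a \<le> (\<Sum>w\<in>?R. if ?D w then 2 else 0)"
    unfolding pair_count_def by (rule sum_mono) (rule summand_le)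
  also have "\<dots> = 2 * int (card {w \<in> ?R. ?D w})"
    by (subst sum.inter_filter[symmetric]) simp_all
  also have "\<dots> \<le> 12"
    using card_le by simp
  finally show ?thesis .
qed

lemma pair_count_ge:
  assumes "\<not> int p dvd a"
  shows "int p - 2 - (\<bar>jacobsthal a\<bar> + \<bar>jacobsthal (- a)\<bar> + \<bar>jacobsthal (- (a\<^sup>2))\<bar>)
           \<le> pair_count i a"
proof -
  have "- \<bar>y\<bar> \<le> \<eta> x * y" for x y
  proof -
    have "\<bar>\<eta> x * y\<bar> \<le> \<bar>y\<bar>"
      unfolding abs_mult using abs_legendre_le_1[of x] by (simp add: mult_left_le_one_le)
    then show ?thesis by (simp add: abs_le_iff)
  qed
  from this[where x = 2 and y = "jacobsthal a"] this[where x = "2 * i" and y = "jacobsthal (- a)"]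
    this[where x = i and y = "jacobsthal (- (a\<^sup>2))"]
  show ?thesis
    unfolding pair_count_eq[OF assms] right_diff_distrib
    using abs_legendre_le_1[of i] by (simp add: abs_le_iff)
qed

lemma sum_two_fourth_powers:
  assumes "p \<ge> 61" and a: "\<not> int p dvd a"
  shows "sum_nz_powers 4 p 2 a"
proof (rule ccontr)
  assume no_rep: "\<not> sum_nz_powers 4 p 2 a"
  obtain i where i: "[i\<^sup>2 = -1] (mod int p)" "\<not> int p dvd i"
    using sqrt_minus_1 .
  have "pair_count i a \<le> 12"
    using pair_count_le_12[OF i(2)] sum_two_fourth_powers_if_residues[OF i(1)] no_rep by blast
  moreover have "\<bar>jacobsthal a\<bar> + \<bar>jacobsthal (- a)\<bar> + \<bar>jacobsthal (- (a\<^sup>2))\<bar> < int p - 14"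
    using sum_abs_less_if_squares_le[OF jacobsthal_squared_le jacobsthal_squared_le jacobsthal_squared_le]
      assms(1) by simp
  ultimately show False
    using pair_count_ge[OF a, of i] by linarith
qed

end

section \<open>Small primes\<close>

lemma g_pow_4_5: "g_pow 4 5 = 4"
proof (rule g_pow_eqI[where b = 4])
  show "\<forall>a\<in>{1..int 5 - 1}. \<exists>k\<le>4. sum_nz_powers 4 5 k a"
    by (rule sum_nz_powers_from_table[where W = "[[1], [1,1], [1,1,1], [1,1,1,1]]"])
      (simp_all add: upt_rec)
  have fourth_power: "[x ^ 4 = 1] (mod int 5)" if "\<not> int 5 dvd x" for x
    using power_mod_in_table[where Q = "{1}", OF _ _ that] by (simp add: upt_rec cong_def)
  show "\<forall>j<4. \<not> sum_nz_powers 4 5 j 4"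
  proof (intro allI impI notI)
    fix j :: nat assume "j < 4" "sum_nz_powers 4 5 j 4"
    then obtain x :: "nat \<Rightarrow> int" where "\<forall>i<j. \<not> int 5 dvd x i" "[(\<Sum>i<j. x i ^ 4) = 4] (mod int 5)"
      unfolding sum_nz_powers_def by auto
    moreover from this(1) have "[(\<Sum>i<j. x i ^ 4) = (\<Sum>i<j. 1)] (mod int 5)"
      by (intro cong_sum fourth_power) simp
    ultimately have "[int j = 4] (mod 5)"
      by (metis cong_sym cong_trans of_nat_id card_lessThan sum_constant mult_1_right of_nat_numeral)
    then show False
      using \<open>j < 4\<close> by (auto simp: cong_def)
  qed
qed simp

lemma g_pow_4_13: "g_pow 4 13 = 3"
proof (rule g_pow_eqI[where b = 7])
  show "\<forall>a\<in>{1..int 13 - 1}. \<exists>k\<le>3. sum_nz_powers 4 13 k a"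
    by (rule sum_nz_powers_from_table[where W =
      "[[1], [1,1], [2], [1,2], [4,4], [2,2], [1,2,2], [2,4,4], [4], [1,4],
      [1,1,4], [2,4]]"])
      (simp_all add: upt_rec)
  show "\<forall>j<3. \<not> sum_nz_powers 4 13 j 7"
  proof (rule not_sum_nz_powers_below_3)
    show "x ^ 4 mod int 13 \<in> {1, 3, 9}" if "\<not> int 13 dvd x" for x
      using that by (rule power_mod_in_table[rotated 2]) (simp_all add: upt_rec)
  qed simp_all
qed simp

lemma g_pow_4_17: "g_pow 4 17 = 3"
proof (rule g_pow_eqI[where b = 6])
  show "\<forall>a\<in>{1..int 17 - 1}. \<exists>k\<le>3. sum_nz_powers 4 17 k a"
    by (rule sum_nz_powers_from_table[where W =
      "[[1], [1,1], [6,2], [6], [1,6], [1,1,6], [6,6,2], [6,6], [3,3], [1,3,3],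
      [3,2,2], [3,2], [3], [1,3], [2,2], [2]]"])
      (simp_all add: upt_rec)
  show "\<forall>j<3. \<not> sum_nz_powers 4 17 j 6"
  proof (rule not_sum_nz_powers_below_3)
    show "x ^ 4 mod int 17 \<in> {1, 4, 13, 16}" if "\<not> int 17 dvd x" for x
      using that by (rule power_mod_in_table[rotated 2]) (simp_all add: upt_rec)
  qed simp_all
qed simp

lemma g_pow_4_29: "g_pow 4 29 = 3"
proof (rule g_pow_eqI[where b = 4])
  show "\<forall>a\<in>{1..int 29 - 1}. \<exists>k\<le>3. sum_nz_powers 4 29 k a"
    by (rule sum_nz_powers_from_table[where W =
      "[[1], [1,1], [8,11], [1,8,11], [8,8,6], [2,3,11], [8], [1,8], [1,1,8],
      [2,3], [2,4], [2,11], [1,2,11], [8,8], [6,4], [2], [1,2], [3,4], [3,11],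
      [6], [1,6], [1,1,6], [3], [4], [11], [1,11], [8,6], [1,8,6]]"])
      (simp_all add: upt_rec)
  show "\<forall>j<3. \<not> sum_nz_powers 4 29 j 4"
  proof (rule not_sum_nz_powers_below_3)
    show "x ^ 4 mod int 29 \<in> {1, 7, 16, 20, 23, 24, 25}" if "\<not> int 29 dvd x" for x
      using that by (rule power_mod_in_table[rotated 2]) (simp_all add: upt_rec)
  qed simp_all
qed simp

lemma two_fourth_powers_mod_37: "\<forall>a\<in>{1..int 37 - 1}. \<exists>k\<le>2. sum_nz_powers 4 37 k a"
  by (rule sum_nz_powers_from_table[where W =
      "[[1], [1,1], [3,5], [3,4], [15,5], [15,4], [3], [1,3], [15], [10], [1,10],
      [9], [1,9], [3,3], [8,8], [2], [1,2], [15,15], [3,9], [10,10], [15,9],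
      [10,9], [3,2], [9,9], [15,2], [8], [1,8], [9,2], [5,5], [5,4], [4,4],
      [2,2], [5], [4], [1,4], [10,8]]"])
    (simp_all add: upt_rec)

lemma two_fourth_powers_mod_41: "\<forall>a\<in>{1..int 41 - 1}. \<exists>k\<le>2. sum_nz_powers 4 41 k a"
  by (rule sum_nz_powers_from_table[where W =
      "[[1], [1,1], [11,3], [11], [1,11], [4,8], [7,6], [11,11], [4,3], [4], [1,4],
      [2,8], [7,12], [11,4], [2,3], [2], [1,2], [16], [1,16], [11,2], [6,8],
      [11,16], [7], [1,7], [6], [1,6], [11,7], [4,16], [11,6], [12,3], [12],
      [1,12], [4,7], [2,16], [11,12], [16,16], [8], [1,8], [2,7], [3]]"])
    (simp_all add: upt_rec)

lemma two_fourth_powers_mod_53: "\<forall>a\<in>{1..int 53 - 1}. \<exists>k\<le>2. sum_nz_powers 4 53 k a"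
  by (rule sum_nz_powers_from_table[where W =
      "[[1], [1,1], [15,17], [15,13], [2,5], [15,22], [11,13], [8,17], [11,22],
      [15], [1,15], [2,22], [11], [1,11], [8], [2], [1,2], [6,13], [3,4],
      [15,15], [3,17], [3,13], [15,11], [6], [1,6], [15,2], [10,4], [3], [1,3],
      [8,8], [8,2], [2,2], [5,4], [15,6], [5,17], [10], [1,10], [15,3], [8,6],
      [2,6], [11,3], [5], [1,5], [4], [1,4], [17], [13], [1,13], [22], [1,22],
      [8,10], [15,5]]"])
    (simp_all add: upt_rec)

lemma prime_1_mod_4_below_61:
  fixes p :: nat
  assumes "prime p" "p mod 4 = 1" "p < 61"
  shows "p \<in> {5, 13, 17, 29, 37, 41, 53}"
proof -
  have composite: "\<not> prime n" if "d dvd n" "1 < d" "d < n" for d n :: nat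
    using that prime_nat_iff by auto
  have "p \<in> {1, 5, 9, 13, 17, 21, 25, 29, 33, 37, 41, 45, 49, 53, 57}"
    using assms(2,3) by simp presburger
  moreover have "\<not> prime p" if "p \<in> {1, 9, 21, 25, 33, 45, 49, 57}"
    using that composite[of 3] composite[of 5] composite[of 7] by auto
  ultimately show ?thesis
    using assms(1) by auto
qed

theorem theorem5:
  fixes p f :: nat and x y :: int
  assumes "prime p" and "p = 4 * f + 1"
    and "int p = x ^ 2 + 4 * y ^ 2" and "[x = 1] (mod 4)"
  shows "(p = 5 \<longrightarrow> g_pow 4 p = 4) \<and>
         (p \<in> {13, 17, 29} \<longrightarrow> g_pow 4 p = 3) \<and>
         (p \<notin> {5, 13, 17, 29} \<longrightarrow> g_pow 4 p = 2)"
proof -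
  have p_mod_4: "p mod 4 = 1"
    using assms(2) by simp
  then interpret pythagorean_prime p
    using assms(1) prime_gt_1_nat[of p] by unfold_locales presburger+
  have "g_pow 4 p = 2" if "p \<notin> {5, 13, 17, 29}"
  proof -
    have "\<forall>a\<in>{1..int p - 1}. \<exists>k\<le>2. sum_nz_powers 4 p k a"
    proof (cases "p \<ge> 61")
      case True
      then show ?thesis
        using sum_two_fourth_powers not_dvd_if_in_range by auto
    next
      case False
      then have "p \<in> {37, 41, 53}"
        using prime_1_mod_4_below_61[OF assms(1) p_mod_4] that by auto
      then show ?thesis
        using two_fourth_powers_mod_37 two_fourth_powers_mod_41 two_fourth_powers_mod_53 by auto
    qed
    then show ?thesis
      using exists_not_sum_nz_powers_below_2 g_pow_eqI by blast
  qed
  then show ?thesis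
    using g_pow_4_5 g_pow_4_13 g_pow_4_17 g_pow_4_29 by auto
qed

end
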